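(* Let $1<p<2$ and let $D:=\{z\in\mathbb{C}\colon 0<\operatorname{Re} z<\tfrac{\pi}{2},\ \operatorname{Im} z>0\}$. For $z\in D$ define $$f(z):=z^{-p}-(\pi-z)^{-p}+(\pi+z)^{-p}-(2\pi-z)^{-p}+(2\pi+z)^{-p}-\cdots=z^{-p}+\sum_{k=1}^{\infty}\big[(k\pi+z)^{-p}-(k\pi-z)^{-p}\big],$$ where the principal branch of the power function is used (so $z^{-p}>0$ for $z>0$). Let $\Delta_p:=\{w\in\mathbb{C}\colon -\tfrac{\pi p}{2}<\arg w\le 0\}$, where $\arg$ takes values in $(-\pi,\pi]$ and $\arg 0:=0$. Then $f(D)\subseteq\Delta_p$.
   Context: The principal branch: $w^{-p}=\exp(-p\log w)$ with $\log$ the principal logarithm, $\arg\in(-\pi,\pi]$. *)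

theory Defs
  imports "HOL-Analysis.Analysis"
begin

text \<open>Principal branch: for complex w, w powr a = exp (a * Ln w) (w \<noteq> 0), with Arg in (-pi, pi], Arg 0 = 0.\<close>

definition D_set :: "complex set" where
  "D_set = {z. 0 < Re z \<and> Re z < pi / 2 \<and> Im z > 0}"

definition f_p :: "real \<Rightarrow> complex \<Rightarrow> complex" where
  "f_p p z = z powr (- of_real p)
     + (\<Sum>k. (of_real (real (Suc k) * pi) + z) powr (- of_real p)
            - (of_real (real (Suc k) * pi) - z) powr (- of_real p))"

definition Delta_p :: "real \<Rightarrow> complex set" where
  "Delta_p p = {w. - (pi * p / 2) < Arg w \<and> Arg w \<le> 0}"

end

theory Submission
  imports Defs "HOL-Complex_Analysis.Complex_Analysis"
begin

text \<open>
  Write \<open>W = e^{i p \<pi>/2} f\<close>. Since \<open>f(D)\<close> lies in \<open>Im w < 0\<close> (termwise: every bracket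
  of the series has nonpositive imaginary part), the claim amounts to \<open>Im W > 0\<close> on \<open>D\<close>.
  The harmonic function \<open>Im W\<close> is nonnegative on the boundary of the half-strip: on the
  left edge the brackets are \<open>s - cnj s\<close> with \<open>Im s \<le> 0\<close>; on the right edge the same holds
  after regrouping the series as \<open>\<Sum> (k\<pi> + z)^{-p} - ((k+1)\<pi> - z)^{-p}\<close>, whose terms are real
  and nonnegative on the real segment; near \<open>0\<close> the dominant term \<open>z^{-p}\<close> has the right sign;
  and \<open>f \<rightarrow> 0\<close> as \<open>Im z \<rightarrow> \<infinity>\<close>. The minimum principle on large rectangles gives
  \<open>Im W \<ge> 0\<close>, and the open mapping theorem makes it strict.
\<close>

lemma cis_mult_powr_of_real:
  fixes w :: complex
  assumes "w \<noteq> 0"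
  shows "cis c * w powr of_real a = of_real (norm w powr a) * cis (c + a * Arg w)"
proof -
  have "w powr of_real a = exp (of_real (a * ln (norm w)) + \<i> * of_real (a * Arg w))"
    using assms by (simp add: powr_def Ln_Arg algebra_simps)
  also have "\<dots> = of_real (norm w powr a) * cis (a * Arg w)"
    using assms by (simp add: exp_add cis_conv_exp powr_def exp_of_real[symmetric] mult.commute)
  finally show ?thesis
    by (simp add: cis_mult mult.left_commute)
qed

lemma Im_cis_mult_powr_of_real:
  "Im (cis c * (w::complex) powr of_real a) = norm w powr a * sin (c + a * Arg w)"
  by (cases "w = 0") (simp_all add: cis_mult_powr_of_real)

lemma Arg_first_quadrant:
  assumes "0 \<le> Re w" "0 \<le> Im w"
  shows "0 \<le> Arg w" "Arg w \<le> pi / 2"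
  using assms Arg_less_0[of w] Arg_Re_nonneg[of w] by auto

lemma Im_powr_neg_nonpos:
  assumes "0 \<le> Re w" "0 \<le> Im w" "0 \<le> p" "p \<le> 2"
  shows "Im (w powr - of_real p) \<le> 0"
proof -
  have "p * Arg w \<le> 2 * (pi / 2)"
    using Arg_first_quadrant[OF assms(1,2)] assms(3,4) by (intro mult_mono) auto
  then have "0 \<le> sin (p * Arg w)"
    using Arg_first_quadrant[OF assms(1,2)] assms(3) by (intro sin_ge_zero) auto
  then show ?thesis
    using Im_cis_mult_powr_of_real[of 0 w "-p"] by simp
qed

lemma Im_powr_neg_neg:
  assumes "0 \<le> Re w" "0 < Im w" "0 < p" "p < 2"
  shows "Im (w powr - of_real p) < 0"
proof -
  have "0 < Arg w" using assms(2) Arg_pos_iff by blast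
  have "p * Arg w \<le> p * (pi / 2)"
    using Arg_first_quadrant[OF assms(1)] assms by (intro mult_left_mono) auto
  also have "\<dots> < 2 * (pi / 2)"
    using assms(4) by (intro mult_strict_right_mono) auto
  finally have "p * Arg w < 2 * (pi / 2)" .
  then have "0 < sin (p * Arg w)"
    using \<open>0 < Arg w\<close> assms(3) by (intro sin_gt_zero) auto
  moreover have "w \<noteq> 0" using assms(2) by auto
  ultimately show ?thesis
    using Im_cis_mult_powr_of_real[of 0 w "-p"] by simp
qed

lemma Im_powr_neg_nonneg:
  assumes "0 < Re w" "Im w \<le> 0" "0 \<le> p" "p \<le> 2"
  shows "0 \<le> Im (w powr - of_real p)"
proof -
  have "cnj (w powr - of_real p) = cnj w powr - of_real p"
    using assms(1) by (simp add: cnj_powr)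
  moreover have "Im (cnj w powr - of_real p) \<le> 0"
    using assms by (intro Im_powr_neg_nonpos) auto
  ultimately have "Im (cnj (w powr - of_real p)) \<le> 0" by simp
  then show ?thesis by simp
qed

lemma Im_cis_mult_powr_neg_nonneg:
  assumes "0 \<le> Re w" "0 \<le> Im w" "0 \<le> p" "p \<le> 2"
  shows "0 \<le> Im (cis (p * pi / 2) * w powr - of_real p)"
proof -
  have "p * (pi / 2 - Arg w) \<le> 2 * (pi / 2)"
    using Arg_first_quadrant[OF assms(1,2)] assms(3,4) by (intro mult_mono) auto
  moreover have "0 \<le> p * (pi / 2 - Arg w)"
    using Arg_first_quadrant[OF assms(1,2)] assms(3) by simp
  ultimately have "0 \<le> sin (p * pi / 2 + - p * Arg w)"
    by (intro sin_ge_zero) (auto simp: algebra_simps)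
  then show ?thesis
    using Im_cis_mult_powr_of_real[of "p * pi / 2" w "-p"] by simp
qed

lemma norm_powr_neg_le:
  fixes w :: complex
  assumes "0 < A" "A \<le> norm w" "0 \<le> p"
  shows "norm (w powr - of_real p) \<le> A powr - p"
  using assms by (subst norm_powr_real_powr') (auto intro: powr_mono2')

lemma Im_cis_mult_imaginary_nonneg:
  assumes "Re w = 0" "Im w \<le> 0" "cos c \<le> 0"
  shows "0 \<le> Im (cis c * w)"
  using assms by (simp add: mult_nonpos_nonpos)

lemma sums_diff_cnj_imaginary:
  assumes "g sums S" "\<And>k. g k = s k - cnj (s k)" "\<And>k. Im (s k) \<le> 0"
  shows "Re S = 0" "Im S \<le> 0"
proof -
  have "(\<lambda>k. Re (g k)) sums Re S" "(\<lambda>k. Im (g k)) sums Im S"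
    using sums_Re sums_Im assms(1) by blast+
  moreover have "Re (g k) = 0" "Im (g k) \<le> 0" for k
    using assms(2,3)[of k] by simp_all
  ultimately show "Re S = 0" "Im S \<le> 0"
    using sums_le[of "\<lambda>k. Im (g k)" "\<lambda>_. 0"] by (simp_all add: sums_iff)
qed

lemma Arg_gt_if_Im_cis_mult_pos:
  assumes "Im w < 0" "0 < Im (cis a * w)" "0 \<le> a" "a \<le> pi"
  shows "- a < Arg w"
proof (rule ccontr)
  assume "\<not> - a < Arg w"
  moreover have "- pi < Arg w" using Arg_bounded[of w] by simp
  ultimately have "0 \<le> sin (- (a + Arg w))"
    using assms(3,4) by (intro sin_ge_zero) auto
  then have "sin (a + Arg w) \<le> 0" by (simp only: sin_minus)
  moreover have "cis a * w = of_real (norm w) * cis (a + Arg w)"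
    using rcis_cmod_Arg[of w] by (metis cis_mult mult.left_commute rcis_def)
  ultimately have "Im (cis a * w) \<le> 0"
    by (simp add: mult_nonneg_nonpos)
  with assms(2) show False by simp
qed

lemma Im_ge_frontier:
  assumes "g holomorphic_on interior S" "continuous_on (closure S) g" "bounded S"
    and "\<And>z. z \<in> frontier S \<Longrightarrow> c \<le> Im (g z)" "z \<in> S"
  shows "c \<le> Im (g z)"
proof -
  have "Re (\<i> * g z) \<le> - c"
  proof (rule maximum_real_frontier[where f = "\<lambda>z. \<i> * g z"])
    show "(\<lambda>z. \<i> * g z) holomorphic_on interior S"
      using assms(1) by (intro holomorphic_intros)
    show "continuous_on (closure S) (\<lambda>z. \<i> * g z)"
      using assms(2) by (intro continuous_intros)
    show "Re (\<i> * g w) \<le> - c" if "w \<in> frontier S" for w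
      using assms(4)[OF that] by simp
  qed (use assms(3,5) in auto)
  then show ?thesis by simp
qed

lemma compact_lower_bound_near_real:
  fixes u :: "complex \<Rightarrow> real"
  assumes "compact K" "continuous_on K u" "\<And>z. z \<in> K \<Longrightarrow> Im z = 0 \<Longrightarrow> 0 \<le> u z" "0 < e"
  obtains d where "0 < d" "\<And>z. z \<in> K \<Longrightarrow> \<bar>Im z\<bar> < d \<Longrightarrow> - e < u z"
proof -
  \<comment> \<open>\<open>C\<close> is compact and misses the real axis, so \<open>\<bar>Im\<bar>\<close> has a positive minimum on it.\<close>
  define C where "C = K \<inter> u -` {..- e}"
  have "closed C"
    unfolding C_def
    by (rule continuous_closed_preimage[OF assms(2) compact_imp_closed[OF assms(1)] closed_atMost])
  then have "compact (K \<inter> C)"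
    by (rule compact_Int_closed[OF assms(1)])
  moreover have "K \<inter> C = C" by (auto simp: C_def)
  ultimately have "compact C" by simp
  show ?thesis
  proof (cases "C = {}")
    case True
    show ?thesis
    proof (rule that[of 1])
      show "- e < u z" if "z \<in> K" for z
        using True that by (auto simp: C_def)
    qed simp
  next
    case False
    have "continuous_on C (\<lambda>z. \<bar>Im z\<bar>)"
      by (intro continuous_intros)
    then obtain z0 where z0: "z0 \<in> C" and min: "\<And>z. z \<in> C \<Longrightarrow> \<bar>Im z0\<bar> \<le> \<bar>Im z\<bar>"
      using continuous_attains_inf[OF \<open>compact C\<close> False] by blast
    show ?thesis
    proof (rule that[of "\<bar>Im z0\<bar>"])
      show "0 < \<bar>Im z0\<bar>"
        using z0 assms(3,4) by (force simp: C_def)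
      show "- e < u z" if "z \<in> K" "\<bar>Im z\<bar> < \<bar>Im z0\<bar>" for z
        using min[of z] that by (force simp: C_def)
    qed
  qed
qed

definition strip :: "complex set" where
  "strip = {z. 0 \<le> Re z \<and> Re z \<le> pi / 2}"

definition shifted_powr :: "real \<Rightarrow> nat \<Rightarrow> complex \<Rightarrow> complex" where
  "shifted_powr p k z = (of_real (real k * pi) + z) powr - of_real p"

definition tail_term :: "real \<Rightarrow> nat \<Rightarrow> complex \<Rightarrow> complex" where
  "tail_term p k z = shifted_powr p (Suc k) z - shifted_powr p (Suc k) (- z)"

definition tail :: "real \<Rightarrow> complex \<Rightarrow> complex" where
  "tail p z = (\<Sum>k. tail_term p k z)"

lemma f_p_eq_tail: "f_p p z = z powr - of_real p + tail p z"
  by (simp add: f_p_def tail_def tail_term_def shifted_powr_def)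

lemma D_set_eq: "D_set = {z. 0 < Re z} \<inter> {z. Re z < pi / 2} \<inter> {z. 0 < Im z}"
  by (auto simp: D_set_def)

lemma open_D_set: "open D_set"
  unfolding D_set_eq by (intro open_Int open_halfspace_Re_gt open_halfspace_Re_lt open_halfspace_Im_gt)

lemma connected_D_set: "connected D_set"
  unfolding D_set_eq
  by (intro convex_connected convex_Int convex_halfspace_Re_gt convex_halfspace_Re_lt convex_halfspace_Im_gt)

lemma D_set_subset_strip: "D_set \<subseteq> strip"
  by (auto simp: D_set_def strip_def)

lemma Re_shift_ge:
  assumes "\<bar>Re z\<bar> \<le> pi / 2" "1 \<le> k"
  shows "real k * pi / 2 \<le> Re (of_real (real k * pi) + z)"
proof -
  have "pi \<le> real k * pi" using assms(2) by simp
  moreover have "- (pi / 2) \<le> Re z" using assms(1) by linarith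
  moreover have "Re (of_real (real k * pi) + z) = real k * pi + Re z" by simp
  ultimately show ?thesis by linarith
qed

lemma Re_shift_pos:
  assumes "\<bar>Re z\<bar> \<le> pi / 2"
  shows "0 < Re (of_real (real (Suc k) * pi) + z)"
proof -
  have "0 < real (Suc k) * pi / 2" by simp
  also have "\<dots> \<le> Re (of_real (real (Suc k) * pi) + z)"
    using assms by (intro Re_shift_ge) auto
  finally show ?thesis .
qed

lemma continuous_on_shifted_powr:
  assumes "continuous_on S g" "\<And>z. z \<in> S \<Longrightarrow> 0 < Re (of_real (real k * pi) + g z)"
  shows "continuous_on S (\<lambda>z. shifted_powr p k (g z))"
  unfolding shifted_powr_def
proof (rule continuous_on_powr_complex)
  show "S \<subseteq> {z. 0 \<le> Re (of_real (real k * pi) + g z) \<or> Im (of_real (real k * pi) + g z) \<noteq> 0}"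
    using assms(2) by fastforce
  show "0 < Re (- of_real p)" if "z \<in> S" "of_real (real k * pi) + g z = 0" for z
    using assms(2)[OF that(1)] that(2) by (metis zero_complex.sel(1) less_irrefl)
qed (intro continuous_intros assms(1))+

lemma holomorphic_on_shifted_powr:
  assumes "g holomorphic_on S" "\<And>z. z \<in> S \<Longrightarrow> 0 < Re (of_real (real k * pi) + g z)"
  shows "(\<lambda>z. shifted_powr p k (g z)) holomorphic_on S"
proof -
  have "of_real (real k * pi) + g z \<notin> \<real>\<^sub>\<le>\<^sub>0" if "z \<in> S" for z
    using assms(2)[OF that] by (auto simp: complex_nonpos_Reals_iff)
  then show ?thesis
    unfolding shifted_powr_def using assms(1) by (intro holomorphic_intros)
qed

lemma norm_shifted_powr_le:
  assumes "\<bar>Re z\<bar> \<le> pi / 2" "1 \<le> k" "0 \<le> p"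
  shows "norm (shifted_powr p k z) \<le> (real k * pi / 2) powr - p"
  unfolding shifted_powr_def
proof (rule norm_powr_neg_le)
  show "0 < real k * pi / 2" using assms(2) by simp
  show "real k * pi / 2 \<le> norm (of_real (real k * pi) + z)"
    using Re_shift_ge[OF assms(1,2)] complex_Re_le_cmod order_trans by blast
qed (rule assms(3))

lemma norm_shifted_powr_le_Im:
  assumes "Im z \<noteq> 0" "0 \<le> p"
  shows "norm (shifted_powr p k z) \<le> \<bar>Im z\<bar> powr - p"
  unfolding shifted_powr_def
  using assms abs_Im_le_cmod[of "of_real (real k * pi) + z"] by (intro norm_powr_neg_le) auto

lemma norm_tail_term_le:
  assumes "z \<in> strip" "0 \<le> p"
  shows "norm (tail_term p k z) \<le> 2 * (real (Suc k) * pi / 2) powr - p"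
proof -
  have Re: "\<bar>Re z\<bar> \<le> pi / 2" "\<bar>Re (- z)\<bar> \<le> pi / 2" using assms(1) by (auto simp: strip_def)
  have "norm (tail_term p k z) \<le> norm (shifted_powr p (Suc k) z) + norm (shifted_powr p (Suc k) (- z))"
    unfolding tail_term_def by (rule norm_triangle_ineq4)
  also have "\<dots> \<le> (real (Suc k) * pi / 2) powr - p + (real (Suc k) * pi / 2) powr - p"
    using Re assms(2) by (intro add_mono norm_shifted_powr_le) auto
  finally show ?thesis by simp
qed

lemma summable_Suc_mult_powr:
  assumes "1 < p" "0 < c"
  shows "summable (\<lambda>k. (real (Suc k) * c) powr - p)"
proof -
  have "summable (\<lambda>k. real k powr - p)" using assms(1) by (simp add: summable_real_powr_iff)
  then have "summable (\<lambda>k. c powr - p * real (Suc k) powr - p)"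
    by (intro summable_mult) (subst summable_Suc_iff)
  then show ?thesis using assms(2) by (simp add: powr_mult mult.commute)
qed

lemma uniform_limit_tail:
  assumes "1 < p"
  shows "uniform_limit strip (\<lambda>n z. \<Sum>k<n. tail_term p k z) (tail p) sequentially"
  unfolding tail_def[abs_def]
proof (rule Weierstrass_m_test)
  show "norm (tail_term p k z) \<le> 2 * (real (Suc k) * pi / 2) powr - p" if "z \<in> strip" for k z
    using norm_tail_term_le[OF that] assms by simp
  show "summable (\<lambda>k. 2 * (real (Suc k) * pi / 2) powr - p)"
    using summable_Suc_mult_powr[OF assms, of "pi / 2"] by (intro summable_mult) (simp add: mult.assoc)
qed

lemma continuous_on_tail_term: "continuous_on strip (tail_term p k)"
proof -
  have "\<bar>Re z\<bar> \<le> pi / 2" "\<bar>Re (- z)\<bar> \<le> pi / 2" if "z \<in> strip" for z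
    using that by (auto simp: strip_def)
  then show ?thesis
    unfolding tail_term_def[abs_def]
    by (intro continuous_on_diff continuous_on_shifted_powr continuous_intros Re_shift_pos) auto
qed

lemma holomorphic_on_tail_term: "tail_term p k holomorphic_on D_set"
proof -
  have "\<bar>Re z\<bar> \<le> pi / 2" "\<bar>Re (- z)\<bar> \<le> pi / 2" if "z \<in> D_set" for z
    using that by (auto simp: D_set_def)
  then show ?thesis
    unfolding tail_term_def[abs_def]
    by (intro holomorphic_on_diff holomorphic_on_shifted_powr holomorphic_intros Re_shift_pos) auto
qed

lemma continuous_on_tail: "1 < p \<Longrightarrow> continuous_on strip (tail p)"
  by (rule uniform_limit_theorem[OF _ uniform_limit_tail])
    (auto intro!: always_eventually continuous_on_sum continuous_on_tail_term)

lemma holomorphic_tail: "1 < p \<Longrightarrow> tail p holomorphic_on D_set"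
proof (rule holomorphic_uniform_sequence[OF open_D_set])
  show "(\<lambda>z. \<Sum>k<n. tail_term p k z) holomorphic_on D_set" for n
    by (intro holomorphic_on_sum holomorphic_on_tail_term)
  fix z assume "1 < p" "z \<in> D_set"
  then obtain d where "0 < d" "cball z d \<subseteq> D_set"
    using open_D_set open_contains_cball by blast
  then show "\<exists>d>0. cball z d \<subseteq> D_set \<and> uniform_limit (cball z d) (\<lambda>n z. \<Sum>k<n. tail_term p k z) (tail p) sequentially"
    using uniform_limit_on_subset[OF uniform_limit_tail[OF \<open>1 < p\<close>]] D_set_subset_strip by blast
qed

lemma f_p_eq_fun: "f_p p = (\<lambda>z. z powr - of_real p + tail p z)"
  by (simp add: fun_eq_iff f_p_eq_tail)

lemma continuous_on_f_p: "1 < p \<Longrightarrow> continuous_on (strip - {0}) (f_p p)"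
  unfolding f_p_eq_fun
  by (intro continuous_intros continuous_on_subset[OF continuous_on_tail]) (auto simp: strip_def)

lemma holomorphic_f_p: "1 < p \<Longrightarrow> f_p p holomorphic_on D_set"
  unfolding f_p_eq_fun
  by (intro holomorphic_intros holomorphic_tail) (auto simp: D_set_def complex_nonpos_Reals_iff)

lemma shifted_powr_tendsto_zero:
  assumes "\<bar>Re z\<bar> \<le> pi / 2" "0 < p"
  shows "(\<lambda>k. shifted_powr p k z) \<longlonglongrightarrow> 0"
proof (rule Lim_null_comparison)
  show "\<forall>\<^sub>F k in sequentially. norm (shifted_powr p k z) \<le> (real k * pi / 2) powr - p"
    using assms by (intro eventually_sequentiallyI[of 1] norm_shifted_powr_le) auto
  have "filterlim (\<lambda>k. real k * (pi / 2)) at_top sequentially"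
    by (rule filterlim_at_top_mult_tendsto_pos[OF tendsto_const _ filterlim_real_sequentially]) simp
  then have "filterlim (\<lambda>k. real k * pi / 2) at_top sequentially" by simp
  then show "(\<lambda>k. (real k * pi / 2) powr - p) \<longlonglongrightarrow> 0"
    using assms(2) by (intro tendsto_neg_powr) auto
qed

lemma tail_sums:
  assumes "1 < p" "z \<in> strip"
  shows "(\<lambda>k. tail_term p k z) sums tail p z"
  unfolding sums_def using uniform_limit_tail[OF assms(1)] assms(2)
  by (rule tendsto_uniform_limitI)

lemma f_p_sums_regrouped:
  assumes "1 < p" "z \<in> strip"
  shows "(\<lambda>k. shifted_powr p k z - shifted_powr p (Suc k) (- z)) sums f_p p z"
proof -
  have telescope: "(\<Sum>k<n. shifted_powr p k z - shifted_powr p (Suc k) (- z))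
      = shifted_powr p 0 z - shifted_powr p n z + (\<Sum>k<n. tail_term p k z)" for n
    by (induction n) (simp_all add: tail_term_def)
  have "(\<lambda>k. tail_term p k z) sums tail p z"
    using assms by (rule tail_sums)
  moreover have "\<bar>Re z\<bar> \<le> pi / 2" using assms(2) by (auto simp: strip_def)
  ultimately have "(\<lambda>n. shifted_powr p 0 z - shifted_powr p n z + (\<Sum>k<n. tail_term p k z))
      \<longlonglongrightarrow> shifted_powr p 0 z - 0 + tail p z"
    using assms(1) unfolding sums_def by (intro tendsto_intros shifted_powr_tendsto_zero) auto
  then show ?thesis
    unfolding sums_def telescope by (simp add: f_p_eq_tail shifted_powr_def)
qed

lemma tendsto_zero_Im_top_if_norm_le:
  assumes "0 < p" "\<And>z. 0 < Im z \<Longrightarrow> norm (g z) \<le> Im z powr - p"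
  shows "(g \<longlongrightarrow> 0) (inf (filtercomap Im at_top) (principal S))" (is "(_ \<longlongrightarrow> 0) ?F")
proof (rule Lim_null_comparison)
  have Im_top: "filterlim Im at_top ?F"
    by (rule filterlim_mono[OF filterlim_filtercomap order_refl inf_le1])
  have "\<forall>\<^sub>F z in ?F. 0 < Im z"
    by (rule eventually_compose_filterlim[OF eventually_gt_at_top Im_top])
  then show "\<forall>\<^sub>F z in ?F. norm (g z) \<le> Im z powr - p"
    by eventually_elim (rule assms(2))
  show "((\<lambda>z. Im z powr - p) \<longlongrightarrow> 0) ?F"
    using assms(1) by (intro tendsto_neg_powr Im_top) simp
qed

lemma tail_tendsto_zero_Im_top:
  assumes "1 < p"
  shows "(tail p \<longlongrightarrow> 0) (inf (filtercomap Im at_top) (principal strip))" (is "(_ \<longlongrightarrow> 0) ?F")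
proof -
  have "norm (shifted_powr p k z) \<le> Im z powr - p" "norm (shifted_powr p k (- z)) \<le> Im z powr - p"
    if "0 < Im z" for k z
    using norm_shifted_powr_le_Im[of z p k] norm_shifted_powr_le_Im[of "- z" p k] that assms by simp_all
  then have "(shifted_powr p k \<longlongrightarrow> 0) ?F" "((\<lambda>z. shifted_powr p k (- z)) \<longlongrightarrow> 0) ?F" for k
    using assms by (auto intro!: tendsto_zero_Im_top_if_norm_le[where p = p])
  then have "(tail_term p k \<longlongrightarrow> 0) ?F" for k
    unfolding tail_term_def[abs_def] using tendsto_diff by fastforce
  then have "\<forall>n. ((\<lambda>z. \<Sum>k<n. tail_term p k z) \<longlongrightarrow> 0) ?F"
    by (intro allI tendsto_null_sum)
  then show ?thesis
    by (intro swap_uniform_limit'[OF always_eventually tendsto_const uniform_limit_tail[OF assms]])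
      (simp_all add: eventually_inf_principal)
qed

lemma f_p_tendsto_zero_Im_top:
  assumes "1 < p"
  shows "(f_p p \<longlongrightarrow> 0) (inf (filtercomap Im at_top) (principal strip))"
proof -
  have "((\<lambda>z. z powr - of_real p) \<longlongrightarrow> 0) (inf (filtercomap Im at_top) (principal strip))"
  proof (rule tendsto_zero_Im_top_if_norm_le)
    show "norm (z powr - of_real p) \<le> Im z powr - p" if "0 < Im z" for z
      using that assms abs_Im_le_cmod[of z] by (intro norm_powr_neg_le) auto
  qed (use assms in simp)
  from tendsto_add[OF this tail_tendsto_zero_Im_top[OF assms]] show ?thesis
    unfolding f_p_eq_fun by simp
qed

lemma f_p_small_Im_top:
  assumes "1 < p" "0 < e"
  obtains Y where "\<And>z. z \<in> strip \<Longrightarrow> Y \<le> Im z \<Longrightarrow> norm (f_p p z) < e"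
proof -
  have "\<forall>\<^sub>F z in inf (filtercomap Im at_top) (principal strip). norm (f_p p z) < e"
    using tendstoD[OF f_p_tendsto_zero_Im_top[OF assms(1)] assms(2)] by simp
  then obtain Y where "\<forall>z. Y \<le> Im z \<longrightarrow> z \<in> strip \<longrightarrow> norm (f_p p z) < e"
    unfolding eventually_inf_principal eventually_filtercomap_at_top_linorder by blast
  then show ?thesis using that by blast
qed

definition rotated_f_p :: "real \<Rightarrow> complex \<Rightarrow> complex" where
  "rotated_f_p p z = cis (p * pi / 2) * f_p p z"

lemma cos_sin_p_half_pi:
  assumes "1 < p" "p < 2"
  shows "cos (p * pi / 2) < 0" "0 < sin (p * pi / 2)"
  using assms by (auto intro!: cos_lt_zero_pi sin_gt_zero simp: field_simps)

lemma Im_f_p_neg: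
  assumes "1 < p" "p < 2" "z \<in> D_set"
  shows "Im (f_p p z) < 0"
proof -
  have z: "0 < Re z" "Re z < pi / 2" "0 < Im z" "z \<in> strip"
    using assms(3) D_set_subset_strip by (auto simp: D_set_def)
  have "Im (tail_term p k z) \<le> 0" for k
  proof -
    have "Im (shifted_powr p (Suc k) z) \<le> 0"
      unfolding shifted_powr_def using assms(1,2) z by (intro Im_powr_neg_nonpos) auto
    moreover have "0 \<le> Im (shifted_powr p (Suc k) (- z))"
      unfolding shifted_powr_def using assms(1,2) z Re_shift_pos[of "- z" k]
      by (intro Im_powr_neg_nonneg) auto
    ultimately show ?thesis by (simp add: tail_term_def)
  qed
  then have "Im (tail p z) \<le> 0"
    using sums_le[OF _ sums_Im[OF tail_sums[OF assms(1) z(4)]] sums_zero] by simp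
  moreover have "Im (z powr - of_real p) < 0"
    using assms(1,2) z by (intro Im_powr_neg_neg) auto
  ultimately show ?thesis by (simp add: f_p_eq_tail)
qed

lemma Im_rotated_f_p_real_nonneg:
  assumes "1 < p" "p < 2" "0 < x" "x \<le> pi / 2"
  shows "0 \<le> Im (rotated_f_p p (of_real x))"
proof -
  define d where "d k = (real k * pi + x) powr - p - (real (Suc k) * pi - x) powr - p" for k
  have "0 \<le> real (Suc k) * pi - x" for k
  proof -
    have "pi \<le> real (Suc k) * pi" by simp
    then show ?thesis using assms(4) pi_gt_zero by linarith
  qed
  then have terms: "shifted_powr p k (of_real x) - shifted_powr p (Suc k) (- of_real x) = of_real (d k)" for k
    using assms(3) by (simp add: shifted_powr_def d_def powr_of_real[symmetric] del: of_nat_Suc)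
  have "0 < real k * pi + x" "real k * pi + x \<le> real (Suc k) * pi - x" for k
    using assms(3,4) by (simp_all add: algebra_simps add_pos_nonneg)
  then have "0 \<le> d k" for k
    unfolding d_def using assms(1) by (simp add: powr_mono2')
  moreover have "(\<lambda>k. of_real (d k)) sums f_p p (of_real x)"
    using f_p_sums_regrouped[OF assms(1), of "of_real x"] assms(3,4)
    unfolding terms by (simp add: strip_def)
  ultimately have "Im (f_p p (of_real x)) = 0" "0 \<le> Re (f_p p (of_real x))"
    using sums_Im[of "\<lambda>k. of_real (d k)"] sums_Re[of "\<lambda>k. of_real (d k)"]
      sums_le[of "\<lambda>_. 0" d] by (auto simp: sums_iff)
  then show ?thesis
    using cos_sin_p_half_pi[OF assms(1,2)] by (simp add: rotated_f_p_def)
qed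

lemma Im_rotated_f_p_left_edge:
  assumes "1 < p" "p < 2" "0 \<le> y"
  shows "0 \<le> Im (rotated_f_p p (Complex 0 y))"
proof -
  define z where "z = Complex 0 y"
  have z: "z \<in> strip" "- z = cnj z" by (simp_all add: z_def strip_def complex_eq_iff)
  have terms: "tail_term p k z = shifted_powr p (Suc k) z - cnj (shifted_powr p (Suc k) z)" for k
    using Re_shift_pos[of z k] z by (simp add: tail_term_def shifted_powr_def cnj_powr strip_def)
  have Im_le: "Im (shifted_powr p (Suc k) z) \<le> 0" for k
    unfolding shifted_powr_def using assms by (intro Im_powr_neg_nonpos) (auto simp: z_def)
  have "Re (tail p z) = 0" "Im (tail p z) \<le> 0"
    using sums_diff_cnj_imaginary[OF tail_sums[OF assms(1) z(1)] terms Im_le] by blast+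
  then have "0 \<le> Im (cis (p * pi / 2) * tail p z)"
    using cos_sin_p_half_pi[OF assms(1,2)] by (intro Im_cis_mult_imaginary_nonneg) auto
  moreover have "0 \<le> Im (cis (p * pi / 2) * z powr - of_real p)"
    using assms by (intro Im_cis_mult_powr_neg_nonneg) (auto simp: z_def)
  ultimately show ?thesis
    by (simp add: rotated_f_p_def f_p_eq_tail distrib_left z_def)
qed

lemma Im_rotated_f_p_right_edge:
  assumes "1 < p" "p < 2" "0 \<le> y"
  shows "0 \<le> Im (rotated_f_p p (Complex (pi / 2) y))"
proof -
  define z where "z = Complex (pi / 2) y"
  have z: "z \<in> strip" by (simp add: z_def strip_def)
  have pos: "0 < Re (of_real (real k * pi) + z)" for k
    by (simp add: z_def add_nonneg_pos)
  have "of_real (real (Suc k) * pi) - z = cnj (of_real (real k * pi) + z)" for k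
    by (simp add: z_def complex_eq_iff algebra_simps)
  then have terms: "shifted_powr p k z - shifted_powr p (Suc k) (- z)
      = shifted_powr p k z - cnj (shifted_powr p k z)" for k
    using pos[of k] by (simp add: shifted_powr_def cnj_powr)
  have Im_le: "Im (shifted_powr p k z) \<le> 0" for k
    unfolding shifted_powr_def using assms pos[of k] by (intro Im_powr_neg_nonpos) (auto simp: z_def)
  have "Re (f_p p z) = 0" "Im (f_p p z) \<le> 0"
    using sums_diff_cnj_imaginary[OF f_p_sums_regrouped[OF assms(1) z] terms Im_le] by blast+
  then show ?thesis
    using cos_sin_p_half_pi[OF assms(1,2)] unfolding rotated_f_p_def z_def[symmetric]
    by (intro Im_cis_mult_imaginary_nonneg) auto
qed

lemma continuous_on_rotated_f_p: "1 < p \<Longrightarrow> continuous_on (strip - {0}) (rotated_f_p p)"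
  unfolding rotated_f_p_def[abs_def] by (intro continuous_intros continuous_on_f_p)

lemma Im_rotated_f_p_near_zero:
  assumes "1 < p" "p < 2" "0 < e"
  obtains r where "0 < r" "\<And>z. z \<in> strip \<Longrightarrow> 0 \<le> Im z \<Longrightarrow> norm z < r \<Longrightarrow> - e < Im (rotated_f_p p z)"
proof -
  have "tail p 0 = 0" by (simp add: tail_def tail_term_def)
  moreover have "0 \<in> strip" by (simp add: strip_def)
  ultimately obtain r where r: "0 < r" "\<And>z. z \<in> strip \<Longrightarrow> dist z 0 < r \<Longrightarrow> dist (tail p z) 0 < e"
    using continuous_on_tail[OF assms(1)] assms(3) unfolding continuous_on_iff by metis
  show ?thesis
  proof (rule that[OF r(1)])
    fix z assume z: "z \<in> strip" "0 \<le> Im z" "norm z < r"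
    have "0 \<le> Im (cis (p * pi / 2) * z powr - of_real p)"
      using assms z by (intro Im_cis_mult_powr_neg_nonneg) (auto simp: strip_def)
    moreover have "- norm (cis (p * pi / 2) * tail p z) \<le> Im (cis (p * pi / 2) * tail p z)"
      using abs_Im_le_cmod[of "cis (p * pi / 2) * tail p z"] by linarith
    moreover have "norm (cis (p * pi / 2) * tail p z) < e"
      using r(2)[OF z(1)] z(3) by (simp add: norm_mult)
    ultimately show "- e < Im (rotated_f_p p z)"
      by (simp add: rotated_f_p_def f_p_eq_tail distrib_left)
  qed
qed

lemma Im_rotated_f_p_near_bottom:
  assumes "1 < p" "p < 2" "0 < e"
  obtains d where "0 < d" "\<And>z. z \<in> strip \<Longrightarrow> 0 \<le> Im z \<Longrightarrow> Im z < d \<Longrightarrow> - e < Im (rotated_f_p p z)"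
proof -
  obtain r where r: "0 < r" "\<And>z. z \<in> strip \<Longrightarrow> 0 \<le> Im z \<Longrightarrow> norm z < r \<Longrightarrow> - e < Im (rotated_f_p p z)"
    using Im_rotated_f_p_near_zero[OF assms] by blast
  define K where "K = cbox 0 (Complex (pi / 2) 1) - ball 0 r"
  have K_strip: "K \<subseteq> strip - {0}"
    using r(1) by (auto simp: K_def strip_def in_cbox_complex_iff)
  have "compact K"
    unfolding K_def by (intro compact_diff compact_cbox open_ball)
  moreover have "continuous_on K (\<lambda>z. Im (rotated_f_p p z))"
    by (intro continuous_intros continuous_on_subset[OF continuous_on_rotated_f_p[OF assms(1)] K_strip])
  moreover have "0 \<le> Im (rotated_f_p p z)" if "z \<in> K" "Im z = 0" for z
  proof -
    have "z = of_real (Re z)" using that(2) by (simp add: complex_eq_iff)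
    moreover have "0 < Re z" "Re z \<le> pi / 2"
      using that r(1) by (auto simp: K_def in_cbox_complex_iff cmod_eq_Re)
    ultimately show ?thesis
      using Im_rotated_f_p_real_nonneg[OF assms(1,2)] by metis
  qed
  ultimately obtain d where d: "0 < d" "\<And>z. z \<in> K \<Longrightarrow> \<bar>Im z\<bar> < d \<Longrightarrow> - e < Im (rotated_f_p p z)"
    using compact_lower_bound_near_real[OF _ _ _ assms(3)] by blast
  show ?thesis
  proof (rule that[of "min d 1"])
    fix z assume z: "z \<in> strip" "0 \<le> Im z" "Im z < min d 1"
    show "- e < Im (rotated_f_p p z)"
    proof (cases "norm z < r")
      case True
      then show ?thesis using r(2) z by blast
    next
      case False
      then have "z \<in> K" using z by (auto simp: K_def strip_def in_cbox_complex_iff)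
      then show ?thesis using d(2) z by simp
    qed
  qed (use d(1) in simp)
qed

lemma frontier_cbox_complex_cases:
  assumes "z \<in> frontier (cbox a b)"
  shows "z \<in> cbox a b" "Re z = Re a \<or> Re z = Re b \<or> Im z = Im a \<or> Im z = Im b"
  using assms by (auto simp: frontier_cbox in_cbox_complex_iff in_box_complex_iff)

lemma Im_rotated_f_p_ge_on_sides:
  assumes "1 < p" "p < 2" "0 < e"
    and top: "\<And>w. w \<in> strip \<Longrightarrow> Y \<le> Im w \<Longrightarrow> norm (f_p p w) < e"
    and bottom: "\<And>w. w \<in> strip \<Longrightarrow> 0 \<le> Im w \<Longrightarrow> Im w < d \<Longrightarrow> - e < Im (rotated_f_p p w)"
    and w: "w \<in> strip" "0 < Im w" "Re w = 0 \<or> Re w = pi / 2 \<or> Im w < d \<or> Y \<le> Im w"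
  shows "- e \<le> Im (rotated_f_p p w)"
  using w(3)
proof (elim disjE)
  assume "Re w = 0"
  then have "w = Complex 0 (Im w)" by (simp add: complex_eq_iff)
  then show ?thesis
    using Im_rotated_f_p_left_edge[OF assms(1,2), of "Im w"] w(2) assms(3) by simp
next
  assume "Re w = pi / 2"
  then have "w = Complex (pi / 2) (Im w)" by (simp add: complex_eq_iff)
  then show ?thesis
    using Im_rotated_f_p_right_edge[OF assms(1,2), of "Im w"] w(2) assms(3) by simp
next
  assume "Im w < d"
  then show ?thesis using bottom w(1,2) by (intro less_imp_le) auto
next
  assume "Y \<le> Im w"
  then have "norm (rotated_f_p p w) < e"
    using top[OF w(1)] by (simp add: rotated_f_p_def norm_mult)
  then show ?thesis
    using abs_Im_le_cmod[of "rotated_f_p p w"] by linarith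
qed

lemma Im_rotated_f_p_nonneg:
  assumes "1 < p" "p < 2" "z \<in> D_set"
  shows "0 \<le> Im (rotated_f_p p z)"
proof (rule field_le_epsilon)
  fix e :: real assume "0 < e"
  obtain Y where Y: "\<And>w. w \<in> strip \<Longrightarrow> Y \<le> Im w \<Longrightarrow> norm (f_p p w) < e"
    using f_p_small_Im_top[OF assms(1) \<open>0 < e\<close>] by blast
  obtain d where d: "0 < d" "\<And>w. w \<in> strip \<Longrightarrow> 0 \<le> Im w \<Longrightarrow> Im w < d \<Longrightarrow> - e < Im (rotated_f_p p w)"
    using Im_rotated_f_p_near_bottom[OF assms(1,2) \<open>0 < e\<close>] by blast
  have z: "0 < Re z" "Re z < pi / 2" "0 < Im z" using assms(3) by (auto simp: D_set_def)
  define S where "S = cbox (Complex 0 (min (d / 2) (Im z / 2))) (Complex (pi / 2) (max Y (Im z + 1)))"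
  have S_strip: "S \<subseteq> strip - {0}" and "interior S \<subseteq> D_set"
    using d(1) z by (auto simp: S_def strip_def D_set_def in_cbox_complex_iff in_box_complex_iff)
  have "- e \<le> Im (rotated_f_p p z)"
  proof (rule Im_ge_frontier[where g = "rotated_f_p p" and S = S])
    show "rotated_f_p p holomorphic_on interior S"
      using holomorphic_on_subset[OF holomorphic_f_p[OF assms(1)] \<open>interior S \<subseteq> D_set\<close>]
      unfolding rotated_f_p_def[abs_def] by (intro holomorphic_intros)
    show "continuous_on (closure S) (rotated_f_p p)"
      using continuous_on_subset[OF continuous_on_rotated_f_p[OF assms(1)] S_strip]
      by (simp add: S_def)
    show "bounded S" "z \<in> S"
      using z by (auto simp: S_def in_cbox_complex_iff)
    fix w assume "w \<in> frontier S"
    then have w: "w \<in> S" and sides: "Re w = 0 \<or> Re w = pi / 2 \<or> Im w = min (d / 2) (Im z / 2) \<or> Im w = max Y (Im z + 1)"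
      using frontier_cbox_complex_cases unfolding S_def by force+
    have "w \<in> strip" "0 < Im w"
      using w S_strip d(1) z by (auto simp: S_def in_cbox_complex_iff)
    moreover have "Re w = 0 \<or> Re w = pi / 2 \<or> Im w < d \<or> Y \<le> Im w"
      using sides d(1) by auto
    ultimately show "- e \<le> Im (rotated_f_p p w)"
      using Im_rotated_f_p_ge_on_sides[OF assms(1,2) \<open>0 < e\<close> Y d(2)] by blast
  qed
  then show "0 \<le> Im (rotated_f_p p z) + e" by simp
qed

lemma rotated_f_p_not_constant:
  assumes "1 < p" "p < 2"
  shows "\<not> rotated_f_p p constant_on D_set"
proof
  assume "rotated_f_p p constant_on D_set"
  then have const: "f_p p w = f_p p z" if "w \<in> D_set" "z \<in> D_set" for w z
    using that unfolding constant_on_def rotated_f_p_def by (metis cis_neq_zero mult_left_cancel)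
  define z where "z = Complex 1 1"
  have z: "z \<in> D_set" using pi_gt3 by (simp add: z_def D_set_def)
  then have "0 < norm (f_p p z)" using Im_f_p_neg[OF assms] by fastforce
  then obtain Y where Y: "\<And>w. w \<in> strip \<Longrightarrow> Y \<le> Im w \<Longrightarrow> norm (f_p p w) < norm (f_p p z)"
    using f_p_small_Im_top[OF assms(1)] by blast
  define w where "w = Complex 1 (max Y 1)"
  have "w \<in> D_set" using pi_gt3 by (simp add: w_def D_set_def)
  then have "norm (f_p p w) < norm (f_p p z)"
    using D_set_subset_strip by (intro Y) (auto simp: w_def)
  then show False
    using const[OF \<open>w \<in> D_set\<close> z] by simp
qed

lemma Im_rotated_f_p_pos:
  assumes "1 < p" "p < 2" "z \<in> D_set"
  shows "0 < Im (rotated_f_p p z)"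
proof (rule ccontr)
  assume "\<not> 0 < Im (rotated_f_p p z)"
  then have Im0: "Im (rotated_f_p p z) = 0"
    using Im_rotated_f_p_nonneg[OF assms] by linarith
  have "rotated_f_p p holomorphic_on D_set"
    unfolding rotated_f_p_def[abs_def]
    by (rule holomorphic_on_mult[OF holomorphic_on_const holomorphic_f_p[OF assms(1)]])
  then have "open (rotated_f_p p ` D_set)"
    using open_mapping_thm[OF _ open_D_set connected_D_set open_D_set order_refl
        rotated_f_p_not_constant[OF assms(1,2)]] by blast
  moreover have "rotated_f_p p z \<in> rotated_f_p p ` D_set"
    using assms(3) by (rule imageI)
  ultimately obtain r where "0 < r" and ball: "ball (rotated_f_p p z) r \<subseteq> rotated_f_p p ` D_set"
    by (rule openE)
  have "dist (rotated_f_p p z) (rotated_f_p p z - \<i> * of_real (r / 2)) = r / 2"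
    using \<open>0 < r\<close> by (simp add: dist_norm norm_mult)
  then have "rotated_f_p p z - \<i> * of_real (r / 2) \<in> rotated_f_p p ` D_set"
    using \<open>0 < r\<close> by (intro subsetD[OF ball]) simp
  then obtain w where w: "rotated_f_p p z - \<i> * of_real (r / 2) = rotated_f_p p w" "w \<in> D_set"
    by (rule imageE)
  have "Im (rotated_f_p p w) < 0"
    using Im0 \<open>0 < r\<close> unfolding w(1)[symmetric] by simp
  then show False
    using Im_rotated_f_p_nonneg[OF assms(1,2) w(2)] by simp
qed

theorem mainTheorem9:
  fixes p :: real
  assumes "1 < p" and "p < 2"
  shows "f_p p ` D_set \<subseteq> Delta_p p"
proof
  fix w assume "w \<in> f_p p ` D_set"
  then obtain z where z: "z \<in> D_set" and w: "w = f_p p z" by blast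
  have "Im w < 0" using Im_f_p_neg[OF assms z] w by simp
  moreover have "0 < Im (cis (p * pi / 2) * w)"
    using Im_rotated_f_p_pos[OF assms z] w by (simp add: rotated_f_p_def)
  moreover have "0 \<le> p * pi / 2" "p * pi / 2 \<le> pi" using assms by simp_all
  ultimately have "- (p * pi / 2) < Arg w"
    by (rule Arg_gt_if_Im_cis_mult_pos)
  moreover have "Arg w < 0"
    using \<open>Im w < 0\<close> Arg_neg_iff by blast
  ultimately show "w \<in> Delta_p p" by (simp add: Delta_p_def mult.commute)
qed

end
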